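(* Let $1\le m\le k-1$, $K=\{1,\dots,k\}$, $T\subseteq K$ with $|T|=m$, and let $\mathcal{V}=\{\bm v_1,\dots,\bm v_{m-1}\}$ be $m-1$ distinct points of $PG(k-1,q)$ with $\mathrm{supp}(\bm v_i)\cap T=\emptyset$ for all $i$. If $m\le q^{k-m-1}$, then $M=X^T\cup Y^T_{\mathcal V}\cup Z^T$ is a minimal $(k-m)$-block over $\mathbb{F}_q$.
   Context: Points of $PG(k-1,q)$ are one-dimensional subspaces of $\mathbb{F}_q^k$, identified with any nonzero representing vector; the support $\mathrm{supp}(\bm x)=\{i:x_i\neq0\}$ of a point is well defined. $\bm e_i$ denotes the $i$-th standard unit vector of $\mathbb{F}_q^k$. Define $X^T=\{\bm x\in PG(k-1,q): \mathrm{supp}(\bm x)\cap T=\emptyset\}$; $Y^T_{\mathcal V}=\{\bm x\in PG(k-1,q): |\mathrm{supp}(\bm x)\cap T|=1\}$ minus all points represented by $\bm v_i+\lambda\bm e_j$ with $\bm v_i\in\mathcal V$, $j\in T$, $\lambda\in\mathbb{F}_q\setminus\{0\}$; $Z^T=\{\bm x\in PG(k-1,q): \mathrm{supp}(\bm x)\text{ is a 2-element subset of }T\}$. For $1\le r\le k-1$, a set $M$ of points of $PG(k-1,q)$ is an $r$-block if every $(k-r)$-dimensional linear subspace of $\mathbb{F}_q^k$ contains at least one point of $M$. A tangent of a point $\bm x\in M$ is a $(k-r)$-dimensional linear subspace $U$ of $\mathbb{F}_q^k$ whose set of points meets $M$ exactly in $\{\bm x\}$. An $r$-block $M$ is minimal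 if every point of $M$ has a tangent. *)

theory Defs
  imports "HOL-Analysis.Analysis"
begin

text \<open>Vectors of F_q^k are elements of 'a^'k, where 'a is a finite field (q = CARD('a))
and 'k a finite index type (k = CARD('k), K = UNIV).\<close>

definition proj_point :: "('a::field)^'k \<Rightarrow> ('a^'k) set" where
  "proj_point x = vec.span {x}"

definition PG :: "(('a::field)^'k) set set" where
  "PG = {proj_point x | x. x \<noteq> 0}"

text \<open>support of a vector, and of a point (the same for every nonzero representative)\<close>
definition supp :: "('a::zero)^'k \<Rightarrow> 'k set" where
  "supp x = {i. x $ i \<noteq> 0}"

definition supp_pt :: "(('a::zero)^'k) set \<Rightarrow> 'k set" where
  "supp_pt p = (\<Union>x\<in>p. supp x)"

text \<open>e_i = axis i 1\<close>

definition X_set :: "'k set \<Rightarrow> (('a::field)^'k) set set" where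
  "X_set T = {p \<in> PG. supp_pt p \<inter> T = {}}"

definition Y_set :: "'k set \<Rightarrow> (('a::field)^'k) set set \<Rightarrow> (('a::field)^'k) set set" where
  "Y_set T V = {p \<in> PG. card (supp_pt p \<inter> T) = 1}
     - {proj_point (v + c *s axis j 1) | v j c. v \<noteq> 0 \<and> proj_point v \<in> V \<and> j \<in> T \<and> c \<noteq> 0}"

definition Z_set :: "'k set \<Rightarrow> (('a::field)^'k) set set" where
  "Z_set T = {p \<in> PG. card (supp_pt p) = 2 \<and> supp_pt p \<subseteq> T}"

text \<open>A point p lies in a linear subspace U iff p \<subseteq> U.\<close>

definition is_r_block :: "nat \<Rightarrow> (('a::field)^'k) set set \<Rightarrow> bool" where
  "is_r_block r M \<longleftrightarrow> M \<subseteq> PG \<and> 1 \<le> r \<and> r \<le> CARD('k) - 1 \<and>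
     (\<forall>U. vec.subspace U \<and> vec.dim U = CARD('k) - r \<longrightarrow> (\<exists>p\<in>M. p \<subseteq> U))"

definition is_tangent :: "nat \<Rightarrow> (('a::field)^'k) set set \<Rightarrow> ('a^'k) set \<Rightarrow> ('a^'k) set \<Rightarrow> bool" where
  "is_tangent r M x U \<longleftrightarrow> vec.subspace U \<and> vec.dim U = CARD('k) - r \<and>
     {p \<in> M. p \<subseteq> U} = {x}"

definition is_minimal_r_block :: "nat \<Rightarrow> (('a::field)^'k) set set \<Rightarrow> bool" where
  "is_minimal_r_block r M \<longleftrightarrow> is_r_block r M \<and> (\<forall>x\<in>M. \<exists>U. is_tangent r M x U)"

end

theory Submission
  imports Defs
begin

text \<open>
  Let \<open>M = X\<^sup>T \<union> Y\<^sup>T\<^sub>V \<union> Z\<^sup>T\<close> and let \<open>U\<close> be a subspace of dimension \<open>m = |T|\<close>. If no nonzero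
  vector of \<open>U\<close> vanishes on \<open>T\<close> (otherwise it gives a point of \<open>X\<^sup>T\<close>), restriction to the
  coordinates in \<open>T\<close> maps \<open>U\<close> onto \<open>\<bbbF>\<^sub>q\<^sup>T\<close>, so \<open>U\<close> contains vectors \<open>y\<^sub>j\<close> that agree with
  \<open>e\<^sub>j\<close> on \<open>T\<close>. If none of them is a point of \<open>Y\<^sup>T\<^sub>V\<close>, each \<open>y\<^sub>j - e\<^sub>j\<close> represents a point of
  \<open>V\<close>; since \<open>|V| < |T|\<close>, two of these points coincide, and \<open>U\<close> contains some \<open>e\<^sub>i - a e\<^sub>j\<close>,
  a point of \<open>Z\<^sup>T\<close>.

  Tangents are spans of families whose coordinates on \<open>m\<close> fixed positions form an identity
  matrix, so a vector of the span is determined by these coordinates. At a point of \<open>Y\<^sup>T\<^sub>V\<close>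
  or \<open>Z\<^sup>T\<close> the family is \<open>e\<^sub>i + r\<^sub>i\<close> (\<open>i \<in> T\<close>) with the \<open>r\<^sub>i\<close> representing distinct points of
  \<open>V\<close> (one of them replaced, resp. rescaled, to pass through the given point): a point of \<open>M\<close>
  in the span has at most two nonzero coordinates in \<open>T\<close>, and then the corresponding \<open>r\<^sub>i\<close> are
  proportional. At a point \<open>u\<close> of \<open>X\<^sup>T\<close> the family is \<open>u\<close> together with the differences of
  the \<open>e\<^sub>i + d\<^sub>i\<close>, where the \<open>d\<^sub>i\<close> are distinct vectors vanishing on \<open>T\<close> and on a coordinate
  \<open>l\<close> with \<open>u\<^sub>l \<noteq> 0\<close>; there are \<open>q\<^bsup>k-m-1\<^esup>\<close> such vectors, hence the hypothesis
  \<open>m \<le> q\<^bsup>k-m-1\<^esup>\<close>. The coordinates in \<open>T\<close> of a vector of that span sum to \<open>0\<close>, which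
  excludes \<open>Y\<^sup>T\<^sub>V\<close>, and a point of \<open>Z\<^sup>T\<close> in it would force two of the \<open>d\<^sub>i\<close> to coincide.
\<close>

lemma proj_point_eq_range: "proj_point x = range (\<lambda>c. c *s x)"
  by (simp add: proj_point_def vec.span_singleton)

lemma in_proj_point: "x \<in> proj_point x"
  unfolding proj_point_eq_range by (metis rangeI vector_smult_lid)

lemma proj_point_scale:
  assumes "c \<noteq> 0" shows "proj_point (c *s x) = proj_point x"
proof -
  have "range (\<lambda>d. d *s (c *s x)) = range (\<lambda>d. d *s x)"
  proof (intro equalityI subsetI)
    fix y assume "y \<in> range (\<lambda>d. d *s x)"
    then obtain d where "y = d *s x" by blast
    then have "y = (d / c) *s (c *s x)" using assms by (simp add: vector_smult_assoc)
    then show "y \<in> range (\<lambda>d. d *s (c *s x))" by blast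
  qed (auto simp: vector_smult_assoc)
  then show ?thesis by (simp add: proj_point_eq_range)
qed

lemma proj_point_eq_imp_scale:
  assumes "proj_point x = proj_point y" and "x \<noteq> 0"
  obtains c where "c \<noteq> 0" and "x = c *s y"
proof -
  have "x \<in> proj_point y" using assms(1) in_proj_point by metis
  then obtain c where "x = c *s y" unfolding proj_point_eq_range by blast
  with assms(2) that show ?thesis by force
qed

lemma proj_point_subset_iff: "vec.subspace U \<Longrightarrow> proj_point x \<subseteq> U \<longleftrightarrow> x \<in> U"
  using in_proj_point[of x] by (auto simp: proj_point_eq_range intro: vec.subspace_scale)

lemma proj_point_in_PG: "x \<noteq> 0 \<Longrightarrow> proj_point x \<in> PG"
  by (auto simp: PG_def)

lemma PG_E:
  assumes "p \<in> PG"
  obtains x where "x \<noteq> 0" and "p = proj_point x"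
  using assms by (auto simp: PG_def)

lemma supp_pt_proj_point: "x \<noteq> 0 \<Longrightarrow> supp_pt (proj_point x) = supp x"
  by (auto simp: supp_pt_def proj_point_eq_range supp_def intro!: rangeI[of _ 1])

lemma proj_point_eq_if_lincomb_eq_0:
  fixes a b :: "'a::field^'k"
  assumes "c \<noteq> 0" and "d \<noteq> 0" and "c *s a + d *s b = 0"
  shows "proj_point a = proj_point b" and "a = 0 \<longleftrightarrow> b = 0"
proof -
  have a: "a = (- d / c) *s b"
    using assms by (simp add: vec_eq_iff field_simps eq_neg_iff_add_eq_0)
  have k: "- d / c \<noteq> 0" using assms by simp
  show "proj_point a = proj_point b" by (simp only: a proj_point_scale[OF k])
  show "a = 0 \<longleftrightarrow> b = 0" using a k by (simp add: vec.scale_eq_0_iff)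
qed

lemma obtain_representatives:
  fixes V :: "('a::field^'k) set set" and I :: "'i set"
  assumes "finite I" and "finite V" and "V \<subseteq> PG" and "card I \<le> card V"
  obtains w where "\<forall>i\<in>I. w i \<noteq> 0 \<and> proj_point (w i) \<in> V"
    and "inj_on (\<lambda>i. proj_point (w i)) I"
proof -
  obtain \<sigma> where \<sigma>: "\<sigma> ` I \<subseteq> V" "inj_on \<sigma> I" using card_le_inj[OF assms(1,2,4)] by blast
  have "\<forall>p\<in>V. \<exists>v. v \<noteq> 0 \<and> proj_point v = p" using assms(3) by (auto simp: PG_def)
  from bchoice[OF this] obtain rep where rep: "\<forall>p\<in>V. rep p \<noteq> 0 \<and> proj_point (rep p) = p"
    by blast
  then have eq: "proj_point (rep (\<sigma> i)) = \<sigma> i" if "i \<in> I" for i using \<sigma>(1) that by blast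
  have "\<forall>i\<in>I. rep (\<sigma> i) \<noteq> 0 \<and> proj_point (rep (\<sigma> i)) \<in> V" using rep \<sigma>(1) by auto
  moreover have "inj_on (\<lambda>i. proj_point (rep (\<sigma> i))) I"
    using inj_on_cong[of I "\<lambda>i. proj_point (rep (\<sigma> i))" \<sigma>] eq \<sigma>(2) by simp
  ultimately show ?thesis by (rule that)
qed

lemma nth_eq_0_if_supp_pt_disjoint:
  "w \<noteq> 0 \<Longrightarrow> supp_pt (proj_point w) \<inter> T = {} \<Longrightarrow> t \<in> T \<Longrightarrow> w $ t = 0"
  by (auto simp: supp_pt_proj_point supp_def)

lemma axis_nth_if: "axis i x $ j = (if j = i then x else 0)"
  by (simp add: axis_def)

lemma sum_eq_sum_supp_Int:
  fixes z :: "'a::zero^'k::finite"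
  assumes "\<And>t. t \<in> T \<Longrightarrow> z $ t = 0 \<Longrightarrow> g t = 0"
  shows "sum g T = sum g (supp z \<inter> T)"
  using assms by (intro sum.mono_neutral_right) (auto simp: supp_def)

lemma X_Y_Z_subset_PG: "X_set T \<union> Y_set T V \<union> Z_set T \<subseteq> PG"
  by (auto simp: X_set_def Y_set_def Z_set_def)

lemma proj_point_in_X_set_iff:
  "x \<noteq> 0 \<Longrightarrow> proj_point x \<in> X_set T \<longleftrightarrow> supp x \<inter> T = {}"
  by (simp add: X_set_def supp_pt_proj_point proj_point_in_PG)

lemma proj_point_in_Z_set_iff:
  "x \<noteq> 0 \<Longrightarrow> proj_point x \<in> Z_set T \<longleftrightarrow> card (supp x) = 2 \<and> supp x \<subseteq> T"
  by (simp add: Z_set_def supp_pt_proj_point proj_point_in_PG)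

lemma proj_point_in_Y_set_imp:
  "x \<noteq> 0 \<Longrightarrow> proj_point x \<in> Y_set T V \<Longrightarrow> card (supp x \<inter> T) = 1"
  by (simp add: Y_set_def supp_pt_proj_point)

lemma proj_point_axis_add_notin_Y_set:
  assumes "w \<noteq> 0" and "proj_point w \<in> V" and "j \<in> T"
  shows "proj_point (axis j 1 + w) \<notin> Y_set T V"
proof -
  have "proj_point (axis j 1 + w) \<in>
      {proj_point (v + c *s axis j 1) | v j c. v \<noteq> 0 \<and> proj_point v \<in> V \<and> j \<in> T \<and> c \<noteq> 0}"
    using assms by (intro CollectI exI[of _ w] exI[of _ j] exI[of _ 1]) (simp add: add.commute)
  then show ?thesis unfolding Y_set_def by blast
qed

lemma proj_point_in_Z_set_axis_pair:
  fixes a :: "'a::field"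
  assumes "i \<in> T" and "j \<in> T" and "i \<noteq> j" and "a \<noteq> 0"
  shows "proj_point (axis i 1 + a *s axis j 1) \<in> Z_set T"
proof -
  have "supp (axis i 1 + a *s axis j (1::'a)) = {i, j}"
    using assms by (auto simp: supp_def axis_nth_if)
  moreover have "axis i 1 + a *s axis j (1::'a) \<noteq> 0"
    using assms(3) by (metis axis_nth_if add.right_neutral vector_add_component
        vector_smult_component mult_zero_right zero_index zero_neq_one)
  ultimately show ?thesis using assms by (simp add: proj_point_in_Z_set_iff)
qed

lemma proj_point_in_Z_set_if_parallel:
  fixes y y' :: "'a::field^'k"
  assumes "i \<in> T" and "j \<in> T" and "i \<noteq> j"
    and "a \<noteq> 0" and "y - axis i 1 = a *s (y' - axis j 1)"
  shows "proj_point (y - a *s y') \<in> Z_set T"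
proof -
  have "y - a *s y' = axis i 1 + (- a) *s axis j 1"
    using assms(5) by (simp add: vec_eq_iff algebra_simps)
  then show ?thesis
    using assms(4) proj_point_in_Z_set_axis_pair[OF assms(1-3), of "- a"] by simp
qed

lemma notin_Y_set_imp_in_V:
  assumes "j \<in> T" and "y $ j = 1" and "\<forall>t\<in>T - {j}. y $ t = 0"
    and "proj_point y \<notin> Y_set T V" and "\<forall>v\<in>V. supp_pt v \<inter> T = {}"
  shows "y - axis j 1 \<noteq> 0" and "proj_point (y - axis j 1) \<in> V"
proof -
  have y0: "y \<noteq> 0" using assms(2) by (metis zero_index zero_neq_one)
  have "supp y \<inter> T = {j}" using assms(1-3) by (auto simp: supp_def)
  then have "proj_point y \<in> {p \<in> PG. card (supp_pt p \<inter> T) = 1}"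
    using y0 by (simp add: supp_pt_proj_point proj_point_in_PG)
  with assms(4) obtain v j' c where v: "proj_point y = proj_point (v + c *s axis j' 1)" "v \<noteq> 0"
    "proj_point v \<in> V" "j' \<in> T" "c \<noteq> 0"
    unfolding Y_set_def by blast
  obtain a where a: "a \<noteq> 0" "y = a *s (v + c *s axis j' 1)"
    using proj_point_eq_imp_scale[OF v(1) y0] by blast
  have vT: "\<forall>t\<in>T. v $ t = 0"
    using assms(5) v(3) supp_pt_proj_point[OF v(2)] by (auto simp: supp_def)
  have "a * (v $ j + c * axis j' 1 $ j) = 1" using a assms(2) by (simp add: ring_distribs mult.assoc)
  then have "j' = j" and "a * c = 1" using vT assms(1) by (auto simp: axis_nth_if split: if_splits)
  then have "y - axis j 1 = a *s v" using a by (auto simp: vec_eq_iff axis_nth_if algebra_simps)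
  then show "y - axis j 1 \<noteq> 0" and "proj_point (y - axis j 1) \<in> V"
    using a(1) v(2,3) by (simp_all add: proj_point_scale vec.scale_eq_0_iff)
qed

lemma X_set_normal_form:
  fixes x :: "('a::field^'k::finite) set"
  assumes "x \<in> X_set T"
  obtains u l where "\<forall>t\<in>T. u $ t = 0" and "u $ l \<noteq> 0" and "x = proj_point u"
proof -
  have "x \<in> PG" using assms by (simp add: X_set_def)
  then obtain u where u: "u \<noteq> 0" "x = proj_point u" by (rule PG_E)
  then have "\<forall>t\<in>T. u $ t = 0" using assms by (auto simp: proj_point_in_X_set_iff supp_def)
  moreover obtain l where "u $ l \<noteq> 0" using u(1) by (metis vec_eq_iff zero_index)
  ultimately show ?thesis using u(2) that by blast
qed

lemma Y_set_normal_form: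
  fixes x :: "('a::field^'k::finite) set"
  assumes "x \<in> Y_set T V"
  obtains j0 u where "j0 \<in> T" and "\<forall>t\<in>T. u $ t = 0" and "x = proj_point (axis j0 1 + u)"
proof -
  have "x \<in> PG" using assms by (simp add: Y_set_def)
  then obtain y where y: "y \<noteq> 0" "x = proj_point y" by (rule PG_E)
  then have "card (supp y \<inter> T) = 1" using assms proj_point_in_Y_set_imp by blast
  then obtain j0 where "supp y \<inter> T = {j0}" by (rule card_1_singletonE)
  then have j0T: "j0 \<in> T" and yj0: "y $ j0 \<noteq> 0" and yT: "\<forall>t\<in>T - {j0}. y $ t = 0"
    by (auto simp: supp_def)
  define u where "u = (1 / y $ j0) *s y - axis j0 1"
  have "x = proj_point (axis j0 1 + u)"
    using y(2) yj0 proj_point_scale[of "1 / y $ j0" y] by (simp add: u_def)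
  moreover have "\<forall>t\<in>T. u $ t = 0" using yT yj0 by (auto simp: u_def axis_nth_if)
  ultimately show ?thesis using j0T that by blast
qed

lemma Z_set_normal_form:
  fixes x :: "('a::field^'k::finite) set"
  assumes "x \<in> Z_set T"
  obtains j j' a where "j \<in> T" and "j' \<in> T" and "j \<noteq> j'" and "a \<noteq> 0"
    and "x = proj_point (axis j 1 + a *s axis j' 1)"
proof -
  have "x \<in> PG" using assms by (simp add: Z_set_def)
  then obtain y where y: "y \<noteq> 0" "x = proj_point y" by (rule PG_E)
  then have "card (supp y) = 2" and yT: "supp y \<subseteq> T"
    using assms proj_point_in_Z_set_iff by auto
  then obtain j j' where jj: "supp y = {j, j'}" "j \<noteq> j'" by (meson card_2_iff)
  then have yj: "y $ j \<noteq> 0" "y $ j' \<noteq> 0" by (auto simp: supp_def)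
  have "y $ t = 0" if "t \<noteq> j" and "t \<noteq> j'" for t using jj that by (auto simp: supp_def)
  then have "(1 / y $ j) *s y = axis j 1 + (y $ j' / y $ j) *s axis j' 1"
    using yj jj(2) by (auto simp: vec_eq_iff axis_nth_if)
  then have "x = proj_point (axis j 1 + (y $ j' / y $ j) *s axis j' 1)"
    using y(2) yj proj_point_scale[of "1 / y $ j" y] by simp
  moreover have "j \<in> T" "j' \<in> T" using jj yT by auto
  moreover have "y $ j' / y $ j \<noteq> 0" using yj by simp
  ultimately show ?thesis using jj(2) that by blast
qed

lemma subspace_restriction_surj:
  fixes U :: "('a::field^'k::finite) set"
  assumes U: "vec.subspace U" and dimU: "card T \<le> vec.dim U"
    and inj: "\<forall>z\<in>U. (\<forall>t\<in>T. z $ t = 0) \<longrightarrow> z = 0"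
  shows "\<exists>y\<in>U. \<forall>t\<in>T. y $ t = w $ t"
proof -
  define P where "P z = (\<chi> i. if i \<in> T then z $ i else 0)" for z :: "'a^'k"
  define S where "S = {z::'a^'k. \<forall>i. i \<notin> T \<longrightarrow> z $ i = 0}"
  have linP: "Vector_Spaces.linear (*s) (*s) P"
    by unfold_locales (auto simp: P_def vec_eq_iff)
  have "inj_on P U"
  proof (rule inj_onI)
    fix x y assume "x \<in> U" "y \<in> U" "P x = P y"
    then have "x - y \<in> U" and "\<forall>t\<in>T. (x - y) $ t = 0"
      using U by (auto simp: vec.subspace_diff P_def vec_eq_iff) metis
    then have "x - y = 0" using inj by blast
    then show "x = y" by simp
  qed
  then have dimPU: "vec.dim (P ` U) = vec.dim U"
    using vec.dim_image_eq[OF linP] U by (metis vec.span_eq_iff)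
  have "S \<subseteq> vec.span ((\<lambda>i. axis i 1) ` T)"
  proof
    fix z assume "z \<in> S"
    then have "(\<Sum>i\<in>T. z $ i *s axis i 1) = z"
      by (auto simp: vec_eq_iff axis_nth_if S_def if_distrib cong: if_cong)
    moreover have "(\<Sum>i\<in>T. z $ i *s axis i 1) \<in> vec.span ((\<lambda>i. axis i 1) ` T)"
      by (intro vec.span_sum vec.span_scale vec.span_base) auto
    ultimately show "z \<in> vec.span ((\<lambda>i. axis i 1) ` T)" by simp
  qed
  then have "vec.dim S \<le> card ((\<lambda>i. axis i (1::'a)) ` T)" by (simp add: vec.dim_le_card)
  moreover have "card ((\<lambda>i. axis i (1::'a)) ` T) \<le> card T" by (rule card_image_le) simp
  ultimately have "vec.dim S \<le> vec.dim (P ` U)" using dimU dimPU by linarith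
  moreover have "P ` U \<subseteq> S" by (auto simp: P_def S_def)
  ultimately have "vec.span (P ` U) = vec.span S" by (intro vec.dim_eq_span)
  moreover have "vec.span (P ` U) = P ` U"
    using vec.linear_subspace_image[OF linP U] by (simp add: vec.span_eq_iff)
  moreover have "P w \<in> S" by (simp add: P_def S_def)
  ultimately have "P w \<in> P ` U" using vec.span_base by blast
  then obtain y where "y \<in> U" and "P y = P w" by auto
  then have "\<forall>t\<in>T. y $ t = w $ t" by (auto simp: P_def vec_eq_iff) metis
  with \<open>y \<in> U\<close> show ?thesis by blast
qed

lemma X_Y_Z_meets_subspace:
  fixes V :: "('a::field^'k::finite) set set"
  assumes fV: "finite V" and VT: "card V < card T" and Vd: "\<forall>v\<in>V. supp_pt v \<inter> T = {}"
    and U: "vec.subspace U" and dimU: "vec.dim U = card T"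
  shows "\<exists>p \<in> X_set T \<union> Y_set T V \<union> Z_set T. p \<subseteq> U"
proof (cases "\<exists>z\<in>U. z \<noteq> 0 \<and> (\<forall>t\<in>T. z $ t = 0)")
  case True
  then obtain z where z: "z \<in> U" "z \<noteq> 0" "\<forall>t\<in>T. z $ t = 0" by blast
  then have "proj_point z \<in> X_set T" by (auto simp: proj_point_in_X_set_iff supp_def)
  then show ?thesis using z(1) proj_point_subset_iff[OF U] by blast
next
  case False
  then have "\<forall>z\<in>U. (\<forall>t\<in>T. z $ t = 0) \<longrightarrow> z = 0" by blast
  then have "\<forall>j\<in>T. \<exists>y\<in>U. \<forall>t\<in>T. y $ t = axis j 1 $ t"
    using subspace_restriction_surj[OF U] dimU by simp
  then obtain y where y: "\<forall>j\<in>T. y j \<in> U \<and> (\<forall>t\<in>T. y j $ t = axis j 1 $ t)" by metis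
  show ?thesis
  proof (cases "\<exists>j\<in>T. proj_point (y j) \<in> Y_set T V")
    case True
    then show ?thesis using y proj_point_subset_iff[OF U] by blast
  next
    case False
    have inV: "y j - axis j 1 \<noteq> 0 \<and> proj_point (y j - axis j 1) \<in> V" if "j \<in> T" for j
      using notin_Y_set_imp_in_V[OF that _ _ _ Vd] y that False by (simp add: axis_nth_if)
    have "\<not> inj_on (\<lambda>j. proj_point (y j - axis j 1)) T"
    proof
      assume "inj_on (\<lambda>j. proj_point (y j - axis j 1)) T"
      then have "card T \<le> card V" using card_inj_on_le[OF _ _ fV] inV by blast
      with VT show False by simp
    qed
    then obtain i j where ij: "i \<in> T" "j \<in> T" "i \<noteq> j"
      "proj_point (y i - axis i 1) = proj_point (y j - axis j 1)"
      unfolding inj_on_def by blast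
    obtain a where a: "a \<noteq> 0" "y i - axis i 1 = a *s (y j - axis j 1)"
      using proj_point_eq_imp_scale[OF ij(4)] inV ij(1) by blast
    have "y i - a *s y j \<in> U" using y ij U by (simp add: vec.subspace_diff vec.subspace_scale)
    moreover have "proj_point (y i - a *s y j) \<in> Z_set T"
      using proj_point_in_Z_set_if_parallel[OF ij(1-3) a] .
    ultimately show ?thesis using proj_point_subset_iff[OF U] by blast
  qed
qed

definition pivots_on :: "'k set \<Rightarrow> ('k \<Rightarrow> 'a::zero_neq_one^'k) \<Rightarrow> bool" where
  "pivots_on S b \<longleftrightarrow> (\<forall>i\<in>S. \<forall>t\<in>S. b i $ t = (if t = i then 1 else 0))"

lemma pivots_on_inj: "pivots_on S b \<Longrightarrow> inj_on b S"
  unfolding pivots_on_def inj_on_def by (metis zero_neq_one)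

lemma pivots_on_span_eq_sum:
  fixes b :: "'k::finite \<Rightarrow> 'a::field^'k"
  assumes "pivots_on S b" and "z \<in> vec.span (b ` S)"
  shows "z = (\<Sum>t\<in>S. z $ t *s b t)"
proof -
  have "(\<Sum>t\<in>S. (c *s x) $ t *s b t) = c *s (\<Sum>t\<in>S. x $ t *s b t)" for c x
    by (simp add: vec.scale_sum_right vector_smult_assoc)
  then have sub: "vec.subspace {z. (\<Sum>t\<in>S. z $ t *s b t) = z}"
    unfolding vec.subspace_def by (simp add: sum.distrib vector_sadd_rdistrib)
  have "(\<Sum>t\<in>S. b i $ t *s b t) = b i" if "i \<in> S" for i
  proof -
    have "(\<Sum>t\<in>S. b i $ t *s b t) = (\<Sum>t\<in>S. if t = i then b t else 0)"
      using assms(1) that by (intro sum.cong) (auto simp: pivots_on_def)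
    then show ?thesis using that by simp
  qed
  then have "(\<Sum>t\<in>S. z $ t *s b t) = z"
    by (intro vec.span_induct[OF assms(2) sub]) auto
  then show ?thesis by (rule sym)
qed

lemma pivots_on_independent:
  fixes b :: "'k::finite \<Rightarrow> 'a::field^'k"
  assumes "pivots_on S b"
  shows "vec.independent (b ` S)"
proof
  assume "vec.dependent (b ` S)"
  then obtain i where i: "i \<in> S" and "b i \<in> vec.span (b ` S - {b i})"
    unfolding vec.dependent_def by blast
  moreover have "b ` S - {b i} = b ` (S - {i})"
    using pivots_on_inj[OF assms] i by (auto simp: inj_on_def)
  moreover have "pivots_on (S - {i}) b" using assms by (simp add: pivots_on_def)
  ultimately have "b i = (\<Sum>t\<in>S - {i}. b i $ t *s b t)"
    by (intro pivots_on_span_eq_sum) simp_all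
  also have "\<dots> = 0" using assms i by (intro sum.neutral) (simp add: pivots_on_def)
  finally have "b i $ i = 0" by simp
  then show False using assms i by (simp add: pivots_on_def)
qed

lemma is_tangent_spanI:
  assumes "vec.independent B" and "card B = CARD('k) - r"
    and "M \<subseteq> PG" and "x \<in> M" and "x \<subseteq> vec.span B"
    and "\<And>z. z \<in> vec.span B \<Longrightarrow> z \<noteq> 0 \<Longrightarrow> proj_point z \<in> M \<Longrightarrow> proj_point z = x"
  shows "is_tangent r M (x :: ('a::field^'k) set) (vec.span B)"
  unfolding is_tangent_def
proof (intro conjI)
  show "vec.dim (vec.span B) = CARD('k) - r"
    using assms(1,2) by (simp add: vec.dim_span vec.dim_eq_card_independent)
  show "{p \<in> M. p \<subseteq> vec.span B} = {x}"
  proof (intro equalityI subsetI)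
    fix p assume p: "p \<in> {p \<in> M. p \<subseteq> vec.span B}"
    then have "p \<in> PG" using assms(3) by blast
    then obtain z where z: "z \<noteq> 0" "p = proj_point z" by (rule PG_E)
    then have "z \<in> vec.span B" using p in_proj_point by blast
    then show "p \<in> {x}" using assms(6) z p by simp
  qed (use assms(4,5) in simp_all)
qed (rule vec.subspace_span)

lemma pivots_on_graph:
  fixes r :: "'k \<Rightarrow> 'a::field^'k"
  shows "\<forall>i\<in>T. \<forall>t\<in>T. r i $ t = 0 \<Longrightarrow> pivots_on T (\<lambda>i. axis i 1 + r i)"
  by (simp add: pivots_on_def axis_nth_if)

lemma graph_span_point_cases:
  fixes r :: "'k::finite \<Rightarrow> 'a::field^'k"
  assumes rT: "\<forall>i\<in>T. \<forall>t\<in>T. r i $ t = 0"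
    and zU: "z \<in> vec.span ((\<lambda>i. axis i 1 + r i) ` T)" and z0: "z \<noteq> 0"
    and zM: "proj_point z \<in> X_set T \<union> Y_set T V \<union> Z_set T"
  obtains (single) j where "j \<in> T" and "z $ j \<noteq> 0" and "z $ j *s (axis j 1 + r j) = z"
    and "proj_point z \<in> Y_set T V"
  | (pair) i i' where "i \<in> T" and "i' \<in> T" and "i \<noteq> i'" and "z $ i \<noteq> 0" and "z $ i' \<noteq> 0"
    and "z $ i *s (axis i 1 + r i) + z $ i' *s (axis i' 1 + r i') = z"
    and "z $ i *s r i + z $ i' *s r i' = 0"
proof -
  have z: "(\<Sum>t\<in>supp z \<inter> T. z $ t *s (axis t 1 + r t)) = z"
    using pivots_on_span_eq_sum[OF pivots_on_graph[OF rT] zU]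
      sum_eq_sum_supp_Int[of T z "\<lambda>t. z $ t *s (axis t 1 + r t)"] by simp
  consider "proj_point z \<in> X_set T" | "proj_point z \<in> Y_set T V" | "proj_point z \<in> Z_set T"
    using zM by blast
  then show ?thesis
  proof cases
    case 1
    then have "supp z \<inter> T = {}" by (simp add: proj_point_in_X_set_iff[OF z0])
    then show ?thesis using z z0 by simp
  next
    case 2
    then obtain j where j: "supp z \<inter> T = {j}"
      using proj_point_in_Y_set_imp[OF z0] card_1_singletonE by metis
    then have "j \<in> T" and "z $ j \<noteq> 0" by (auto simp: supp_def)
    moreover have "z $ j *s (axis j 1 + r j) = z" using z j by simp
    ultimately show ?thesis using 2 single by blast
  next
    case 3
    then have "card (supp z) = 2" and zT: "supp z \<subseteq> T"
      by (simp_all add: proj_point_in_Z_set_iff[OF z0])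
    then obtain i i' where ii: "supp z = {i, i'}" "i \<noteq> i'" by (meson card_2_iff)
    then have z2: "z $ i *s (axis i 1 + r i) + z $ i' *s (axis i' 1 + r i') = z"
      using z zT by (simp add: Int_absorb2)
    have "(z $ i *s r i + z $ i' *s r i') $ t = 0" for t
    proof (cases "t \<in> T")
      case True
      then show ?thesis using rT ii zT by simp
    next
      case False
      then have "z $ t = 0" and "t \<noteq> i" and "t \<noteq> i'" using ii zT by (auto simp: supp_def)
      then show ?thesis
        using arg_cong[OF z2, of "\<lambda>v. v $ t"] by (simp add: axis_nth_if ring_distribs)
    qed
    then have "z $ i *s r i + z $ i' *s r i' = 0" by (simp add: vec_eq_iff)
    moreover have "i \<in> T" "i' \<in> T" "z $ i \<noteq> 0" "z $ i' \<noteq> 0" using ii zT by (auto simp: supp_def)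
    ultimately show ?thesis using ii(2) z2 pair[of i i'] by simp
  qed
qed

lemma is_tangent_graph:
  fixes r :: "'k::finite \<Rightarrow> 'a::field^'k"
  assumes rT: "\<forall>i\<in>T. \<forall>t\<in>T. r i $ t = 0"
    and xM: "x \<in> X_set T \<union> Y_set T V \<union> Z_set T"
    and xU: "x \<subseteq> vec.span ((\<lambda>i. axis i 1 + r i) ` T)"
    and single_eq: "\<And>j. j \<in> T \<Longrightarrow> proj_point (axis j 1 + r j) \<in> Y_set T V
      \<Longrightarrow> proj_point (axis j 1 + r j) = x"
    and pair_eq: "\<And>i i' c c'. i \<in> T \<Longrightarrow> i' \<in> T \<Longrightarrow> i \<noteq> i' \<Longrightarrow> c \<noteq> 0 \<Longrightarrow> c' \<noteq> 0
      \<Longrightarrow> c *s r i + c' *s r i' = 0 \<Longrightarrow> proj_point (c *s (axis i 1 + r i) + c' *s (axis i' 1 + r i')) = x"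
  shows "is_tangent (CARD('k) - card T) (X_set T \<union> Y_set T V \<union> Z_set T) x
    (vec.span ((\<lambda>i. axis i 1 + r i) ` T))"
proof (rule is_tangent_spanI[OF pivots_on_independent[OF pivots_on_graph[OF rT]] _ X_Y_Z_subset_PG xM xU])
  have "card T \<le> CARD('k)" by (simp add: card_mono)
  moreover have "card ((\<lambda>i. axis i 1 + r i) ` T) = card T"
    by (rule card_image[OF pivots_on_inj[OF pivots_on_graph[OF rT]]])
  ultimately show "card ((\<lambda>i. axis i 1 + r i) ` T) = CARD('k) - (CARD('k) - card T)" by simp
next
  fix z assume zU: "z \<in> vec.span ((\<lambda>i. axis i 1 + r i) ` T)" and "z \<noteq> 0"
    and zM: "proj_point z \<in> X_set T \<union> Y_set T V \<union> Z_set T"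
  from rT zU this(2) zM show "proj_point z = x"
  proof (cases rule: graph_span_point_cases)
    case (single j)
    have "proj_point z = proj_point (axis j 1 + r j)"
      using proj_point_scale[OF single(2), of "axis j 1 + r j"] single(3) by simp
    then show ?thesis using single(1,4) single_eq by simp
  next
    case (pair i i')
    then show ?thesis using pair_eq[OF pair(1-5,7)] by simp
  qed
qed

lemma is_tangent_graph_Y_point:
  fixes r :: "'k::finite \<Rightarrow> 'a::field^'k"
  assumes rT: "\<forall>i\<in>T. \<forall>t\<in>T. r i $ t = 0" and j0: "j0 \<in> T"
    and xY: "proj_point (axis j0 1 + r j0) \<in> Y_set T V"
    and rV: "\<forall>i\<in>T - {j0}. r i \<noteq> 0 \<and> proj_point (r i) \<in> V"
    and r_inj: "inj_on (\<lambda>i. proj_point (r i)) (T - {j0})"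
  shows "is_tangent (CARD('k) - card T) (X_set T \<union> Y_set T V \<union> Z_set T)
    (proj_point (axis j0 1 + r j0)) (vec.span ((\<lambda>i. axis i 1 + r i) ` T))"
proof (rule is_tangent_graph[OF rT])
  show "proj_point (axis j0 1 + r j0) \<in> X_set T \<union> Y_set T V \<union> Z_set T" using xY by blast
  have "axis j0 1 + r j0 \<in> vec.span ((\<lambda>i. axis i 1 + r i) ` T)"
    using j0 by (intro vec.span_base) simp
  then show "proj_point (axis j0 1 + r j0) \<subseteq> vec.span ((\<lambda>i. axis i 1 + r i) ` T)"
    by (simp add: proj_point_subset_iff vec.subspace_span)
next
  fix j assume j: "j \<in> T" and jY: "proj_point (axis j 1 + r j) \<in> Y_set T V"
  then have "j = j0" using rV proj_point_axis_add_notin_Y_set by blast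
  then show "proj_point (axis j 1 + r j) = proj_point (axis j0 1 + r j0)" by simp
next
  fix i i' c c' assume ii: "i \<in> T" "i' \<in> T" "i \<noteq> i'" "c \<noteq> 0" "c' \<noteq> 0"
    and lin: "c *s r i + c' *s r i' = 0"
  have same: "proj_point (r i) = proj_point (r i')" and "r i = 0 \<longleftrightarrow> r i' = 0"
    using proj_point_eq_if_lincomb_eq_0[OF ii(4,5) lin] by simp_all
  have good_iff: "r i \<noteq> 0 \<and> proj_point (r i) \<in> V \<longleftrightarrow> i \<noteq> j0" if "i \<in> T" for i
    using rV that proj_point_axis_add_notin_Y_set[OF _ _ j0] xY by blast
  have "i \<noteq> j0 \<longleftrightarrow> i' \<noteq> j0"
    by (simp only: good_iff[OF ii(1), symmetric] good_iff[OF ii(2), symmetric] same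
        \<open>r i = 0 \<longleftrightarrow> r i' = 0\<close>)
  then have "i \<in> T - {j0}" and "i' \<in> T - {j0}" using ii(1-3) by auto
  then have "i = i'" using r_inj same by (simp add: inj_on_def)
  with ii(3) show "proj_point (c *s (axis i 1 + r i) + c' *s (axis i' 1 + r i'))
      = proj_point (axis j0 1 + r j0)" by simp
qed

lemma tangent_Y_set:
  fixes V :: "('a::field^'k::finite) set set"
  assumes fV: "finite V" and VPG: "V \<subseteq> PG" and TV: "card T \<le> Suc (card V)"
    and Vd: "\<forall>v\<in>V. supp_pt v \<inter> T = {}" and xY: "x \<in> Y_set T V"
  shows "\<exists>U. is_tangent (CARD('k) - card T) (X_set T \<union> Y_set T V \<union> Z_set T) x U"
proof -
  obtain j0 u where j0: "j0 \<in> T" and uT: "\<forall>t\<in>T. u $ t = 0"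
    and x: "x = proj_point (axis j0 1 + u)"
    using Y_set_normal_form[OF xY] by blast
  have card_le: "card (T - {j0}) \<le> card V" using TV j0 by simp
  obtain w where w: "\<forall>i\<in>T - {j0}. w i \<noteq> 0 \<and> proj_point (w i) \<in> V"
    and w_inj: "inj_on (\<lambda>i. proj_point (w i)) (T - {j0})"
    by (rule obtain_representatives[OF _ fV VPG card_le]) auto
  define r where "r i = (if i = j0 then u else w i)" for i
  have "w i $ t = 0" if "i \<in> T - {j0}" and "t \<in> T" for i t
    using w Vd that by (intro nth_eq_0_if_supp_pt_disjoint[of "w i" T t]) auto
  then have rT: "\<forall>i\<in>T. \<forall>t\<in>T. r i $ t = 0" using uT by (simp add: r_def)
  have "inj_on (\<lambda>i. proj_point (r i)) (T - {j0})"
    using w_inj inj_on_cong[of "T - {j0}" "\<lambda>i. proj_point (r i)"] by (simp add: r_def)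
  then show ?thesis
    using is_tangent_graph_Y_point[OF rT j0, of V] w x xY by (auto simp: r_def)
qed

lemma proj_point_graph_pair_eq:
  fixes r :: "'k \<Rightarrow> 'a::field^'k::finite"
  assumes "r j' \<noteq> 0" and rjj: "r j + a *s r j' = 0"
    and c: "c \<noteq> 0" and lin: "c *s r j + c' *s r j' = 0"
  shows "proj_point (c *s (axis j 1 + r j) + c' *s (axis j' 1 + r j'))
    = proj_point (axis j 1 + a *s axis j' 1)"
proof -
  have "(a * c - c') *s r j' = c *s (r j + a *s r j') - (c *s r j + c' *s r j')"
    by (simp add: vec_eq_iff algebra_simps)
  then have "(a * c - c') *s r j' = 0" using rjj lin by simp
  then have "c' = a * c" using assms(1) by (simp add: vec.scale_eq_0_iff)
  then have "c *s (axis j 1 + r j) + c' *s (axis j' 1 + r j')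
      = c *s (axis j 1 + a *s axis j' 1) + c *s (r j + a *s r j')"
    by (simp add: vec_eq_iff algebra_simps)
  also have "\<dots> = c *s (axis j 1 + a *s axis j' 1)" using rjj by simp
  finally show ?thesis by (simp only: proj_point_scale[OF c])
qed

lemma is_tangent_graph_Z_point:
  fixes r :: "'k::finite \<Rightarrow> 'a::field^'k"
  assumes rT: "\<forall>i\<in>T. \<forall>t\<in>T. r i $ t = 0"
    and jj: "j \<in> T" "j' \<in> T" "j \<noteq> j'" and a0: "a \<noteq> 0"
    and rV: "\<forall>i\<in>T. r i \<noteq> 0 \<and> proj_point (r i) \<in> V"
    and r_eq: "\<And>i i'. i \<in> T \<Longrightarrow> i' \<in> T \<Longrightarrow> i \<noteq> i' \<Longrightarrow> proj_point (r i) = proj_point (r i')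
      \<Longrightarrow> {i, i'} = {j, j'}"
    and rjj: "r j + a *s r j' = 0"
  shows "is_tangent (CARD('k) - card T) (X_set T \<union> Y_set T V \<union> Z_set T)
    (proj_point (axis j 1 + a *s axis j' 1)) (vec.span ((\<lambda>i. axis i 1 + r i) ` T))"
proof (rule is_tangent_graph[OF rT])
  show "proj_point (axis j 1 + a *s axis j' 1) \<in> X_set T \<union> Y_set T V \<union> Z_set T"
    using proj_point_in_Z_set_axis_pair[OF jj a0] by blast
  have "axis j 1 + a *s axis j' 1 = (axis j 1 + r j) + a *s (axis j' 1 + r j')"
    using rjj by (simp add: vec_eq_iff algebra_simps)
  also have "\<dots> \<in> vec.span ((\<lambda>i. axis i 1 + r i) ` T)"
    using jj by (intro vec.span_add vec.span_scale vec.span_base) simp_all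
  finally show "proj_point (axis j 1 + a *s axis j' 1) \<subseteq> vec.span ((\<lambda>i. axis i 1 + r i) ` T)"
    by (simp add: proj_point_subset_iff vec.subspace_span)
next
  fix i assume "i \<in> T" and "proj_point (axis i 1 + r i) \<in> Y_set T V"
  then show "proj_point (axis i 1 + r i) = proj_point (axis j 1 + a *s axis j' 1)"
    using proj_point_axis_add_notin_Y_set rV by blast
next
  fix i i' c c' assume ii: "i \<in> T" "i' \<in> T" "i \<noteq> i'" "c \<noteq> 0" "c' \<noteq> 0"
    and lin: "c *s r i + c' *s r i' = 0"
  have rj': "r j' \<noteq> 0" using rV jj(2) by simp
  have "{i, i'} = {j, j'}"
    using r_eq[OF ii(1-3)] proj_point_eq_if_lincomb_eq_0(1)[OF ii(4,5) lin] by blast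
  then consider "i = j" "i' = j'" | "i = j'" "i' = j" using jj(3) by (auto simp: doubleton_eq_iff)
  then show "proj_point (c *s (axis i 1 + r i) + c' *s (axis i' 1 + r i'))
      = proj_point (axis j 1 + a *s axis j' 1)"
  proof cases
    case 1
    then show ?thesis using proj_point_graph_pair_eq[OF rj' rjj ii(4)] lin by simp
  next
    case 2
    then have "c' *s r j + c *s r j' = 0" using lin by (simp add: add.commute)
    then have "proj_point (c' *s (axis j 1 + r j) + c *s (axis j' 1 + r j'))
        = proj_point (axis j 1 + a *s axis j' 1)"
      by (rule proj_point_graph_pair_eq[OF rj' rjj ii(5)])
    then show ?thesis using 2 by (simp only: add.commute)
  qed
qed

lemma tangent_Z_set:
  fixes V :: "('a::field^'k::finite) set set"
  assumes fV: "finite V" and VPG: "V \<subseteq> PG" and TV: "card T \<le> Suc (card V)"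
    and Vd: "\<forall>v\<in>V. supp_pt v \<inter> T = {}" and xZ: "x \<in> Z_set T"
  shows "\<exists>U. is_tangent (CARD('k) - card T) (X_set T \<union> Y_set T V \<union> Z_set T) x U"
proof -
  obtain j j' a where jj: "j \<in> T" "j' \<in> T" "j \<noteq> j'" and a0: "a \<noteq> 0"
    and x: "x = proj_point (axis j 1 + a *s axis j' 1)"
    using Z_set_normal_form[OF xZ] by blast
  have card_le: "card (T - {j'}) \<le> card V" using TV jj by simp
  obtain w where w: "\<forall>i\<in>T - {j'}. w i \<noteq> 0 \<and> proj_point (w i) \<in> V"
    and w_inj: "inj_on (\<lambda>i. proj_point (w i)) (T - {j'})"
    by (rule obtain_representatives[OF _ fV VPG card_le]) auto
  have wT: "w i $ t = 0" if "i \<in> T - {j'}" and "t \<in> T" for i t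
    using w Vd that by (intro nth_eq_0_if_supp_pt_disjoint[of "w i" T t]) auto
  define \<tau> where "\<tau> i = (if i = j' then j else i)" for i
  define s where "s = - 1 / a"
  define r where "r i = (if i = j' then s *s w j else w i)" for i
  have \<tau>T: "\<tau> i \<in> T - {j'}" if "i \<in> T" for i using that jj by (auto simp: \<tau>_def)
  have s0: "s \<noteq> 0" using a0 by (simp add: s_def)
  have r_pt: "r i \<noteq> 0 \<and> proj_point (r i) = proj_point (w (\<tau> i))" if "i \<in> T" for i
    using w that s0 jj by (auto simp: r_def \<tau>_def proj_point_scale vec.scale_eq_0_iff)
  have rT: "\<forall>i\<in>T. \<forall>t\<in>T. r i $ t = 0" using wT jj by (simp add: r_def)
  have "\<forall>i\<in>T. r i \<noteq> 0 \<and> proj_point (r i) \<in> V" using r_pt w \<tau>T by simp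
  moreover have "{i, i'} = {j, j'}"
    if "i \<in> T" "i' \<in> T" "i \<noteq> i'" "proj_point (r i) = proj_point (r i')" for i i'
  proof -
    have "\<tau> i = \<tau> i'" using w_inj \<tau>T that r_pt by (simp add: inj_on_def)
    then show ?thesis using that(3) by (auto simp: \<tau>_def split: if_splits)
  qed
  moreover have "r j + a *s r j' = 0" using a0 jj(3) by (simp add: r_def s_def vector_smult_assoc)
  ultimately show ?thesis using is_tangent_graph_Z_point[OF rT jj a0] x by blast
qed

lemma card_vanishing_on:
  fixes A :: "'k::finite set"
  shows "card {d::('a::{zero,finite})^'k. \<forall>t\<in>A. d $ t = 0} = CARD('a) ^ (CARD('k) - card A)"
proof -
  let ?D = "{d::'a^'k. \<forall>t\<in>A. d $ t = 0}"
  have "bij_betw (\<lambda>d. restrict (vec_nth d) (- A)) ?D (PiE (- A) (\<lambda>_. UNIV))"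
  proof (rule bij_betw_byWitness[where f' = "\<lambda>h. \<chi> i. if i \<in> A then 0 else h i"])
    show "\<forall>a\<in>?D. (\<chi> i. if i \<in> A then 0 else restrict (vec_nth a) (- A) i) = a"
      by (auto simp: vec_eq_iff)
    show "\<forall>a'\<in>PiE (- A) (\<lambda>_. UNIV). restrict (vec_nth (\<chi> i. if i \<in> A then 0 else a' i)) (- A) = a'"
      by (auto simp: PiE_def extensional_def fun_eq_iff)
    show "(\<lambda>d. restrict (vec_nth d) (- A)) ` ?D \<subseteq> PiE (- A) (\<lambda>_. UNIV)" by auto
    show "(\<lambda>h. \<chi> i. if i \<in> A then 0 else h i) ` PiE (- A) (\<lambda>_. UNIV) \<subseteq> ?D" by auto
  qed
  then have "card ?D = card (PiE (- A) (\<lambda>_. (UNIV::'a set)))" by (rule bij_betw_same_card)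
  also have "\<dots> = CARD('a) ^ card (- A)" by (simp add: card_PiE)
  also have "card (- A) = CARD('k) - card A" by (simp add: Compl_eq_Diff_UNIV card_Diff_subset)
  finally show ?thesis .
qed

lemma obtain_inj_vanishing_on:
  fixes A :: "'k::finite set" and T :: "'i set"
  assumes "finite T" and "card T \<le> CARD('a::{zero,finite}) ^ (CARD('k) - card A)"
  obtains d :: "'i \<Rightarrow> ('a::{zero,finite})^'k" where "inj_on d T" and "\<forall>i\<in>T. \<forall>t\<in>A. d i $ t = 0"
proof -
  have "card T \<le> card {d::'a^'k. \<forall>t\<in>A. d $ t = 0}"
    using assms(2) by (simp add: card_vanishing_on)
  then obtain d where "d ` T \<subseteq> {d::'a^'k. \<forall>t\<in>A. d $ t = 0}" and "inj_on d T"
    using card_le_inj[OF assms(1) finite] by blast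
  moreover from this(1) have "\<forall>i\<in>T. \<forall>t\<in>A. d i $ t = 0" by blast
  ultimately show ?thesis using that by blast
qed

text \<open>The span of \<open>u\<close> and of all \<open>\<Sum>\<^sub>t a\<^sub>t f\<^sub>t\<close> with \<open>\<Sum>\<^sub>t a\<^sub>t = 0\<close> (\<open>t \<in> T\<close>), described
  through coordinates: when \<open>f\<^sub>t\<close> has coordinates \<open>e\<^sub>t\<close> on \<open>T \<union> {l}\<close> and \<open>u\<close> vanishes on \<open>T\<close>,
  the coefficients of \<open>z\<close> are \<open>a\<^sub>t = z\<^sub>t\<close> and \<open>z\<^sub>l / u\<^sub>l\<close>.\<close>
definition X_tangent_space :: "'k set \<Rightarrow> 'a::field^'k \<Rightarrow> 'k \<Rightarrow> ('k \<Rightarrow> 'a^'k) \<Rightarrow> ('a^'k) set" where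
  "X_tangent_space T u l f =
     {z. (\<Sum>t\<in>T. z $ t) = 0 \<and> (z $ l / u $ l) *s u + (\<Sum>t\<in>T. z $ t *s f t) = z}"

lemma subspace_X_tangent_space: "vec.subspace (X_tangent_space T u l f)"
  unfolding vec.subspace_def
proof (intro conjI ballI allI)
  fix y z assume "y \<in> X_tangent_space T u l f" and "z \<in> X_tangent_space T u l f"
  then show "y + z \<in> X_tangent_space T u l f"
    by (simp add: X_tangent_space_def sum.distrib add_divide_distrib vector_sadd_rdistrib add_ac)
next
  fix c z assume z: "z \<in> X_tangent_space T u l f"
  have "((c *s z) $ l / u $ l) *s u + (\<Sum>t\<in>T. (c *s z) $ t *s f t)
      = c *s ((z $ l / u $ l) *s u + (\<Sum>t\<in>T. z $ t *s f t))"
    by (simp add: vec_eq_iff sum_distrib_left algebra_simps)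
  also have "\<dots> = c *s z" using z by (simp add: X_tangent_space_def)
  finally have "((c *s z) $ l / u $ l) *s u + (\<Sum>t\<in>T. (c *s z) $ t *s f t) = c *s z" .
  moreover have "(\<Sum>t\<in>T. (c *s z) $ t) = 0"
    using z by (simp add: X_tangent_space_def sum_distrib_left[symmetric])
  ultimately show "c *s z \<in> X_tangent_space T u l f" by (simp add: X_tangent_space_def)
qed (simp add: X_tangent_space_def)

lemma scale_in_X_tangent_space:
  "\<forall>t\<in>T. u $ t = 0 \<Longrightarrow> u $ l \<noteq> 0 \<Longrightarrow> c *s u \<in> X_tangent_space T u l f"
  by (simp add: X_tangent_space_def)

lemma diff_in_X_tangent_space:
  fixes f :: "'k::finite \<Rightarrow> 'a::field^'k"
  assumes f: "\<forall>i\<in>T. \<forall>t\<in>insert l T. f i $ t = (if t = i then 1 else 0)"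
    and "l \<notin> T" and "i \<in> T" and "j \<in> T"
  shows "f i - f j \<in> X_tangent_space T u l f"
proof -
  have v: "(f i - f j) $ t = (if t = i then 1 else 0) - (if t = j then 1 else 0)"
    if "t \<in> insert l T" for t
    using that assms by auto
  have "(\<Sum>t\<in>T. (f i - f j) $ t *s f t)
      = (\<Sum>t\<in>T. (if t = i then f t else 0) - (if t = j then f t else 0))"
    using v by (intro sum.cong) (auto simp: vector_sub_rdistrib)
  then have "(\<Sum>t\<in>T. (f i - f j) $ t *s f t) = f i - f j"
    using assms(3,4) by (simp add: sum_subtractf)
  moreover have "(\<Sum>t\<in>T. (f i - f j) $ t) = 0" using v assms(3,4) by (simp add: sum_subtractf)
  moreover have "(f i - f j) $ l = 0" using v[of l] assms(2-4) by auto
  ultimately show ?thesis by (simp add: X_tangent_space_def)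
qed

lemma proj_point_X_tangent_space_notin_Y_set:
  fixes z u :: "'a::field^'k::finite"
  assumes "z \<in> X_tangent_space T u l f" and "z \<noteq> 0"
  shows "proj_point z \<notin> Y_set T V"
proof
  assume "proj_point z \<in> Y_set T V"
  then obtain p where p: "supp z \<inter> T = {p}"
    using proj_point_in_Y_set_imp[OF assms(2)] card_1_singletonE by metis
  then have "(\<Sum>t\<in>T. z $ t) = z $ p" using sum_eq_sum_supp_Int[of T z "\<lambda>t. z $ t"] by simp
  then show False using assms(1) p by (auto simp: X_tangent_space_def supp_def)
qed

lemma proj_point_X_tangent_space_notin_Z_set:
  fixes z u :: "'a::field^'k::finite" and d :: "'k \<Rightarrow> 'a^'k"
  assumes lT: "l \<notin> T" and dT: "\<forall>i\<in>T. \<forall>t\<in>insert l T. d i $ t = 0" and d_inj: "inj_on d T"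
    and zU: "z \<in> X_tangent_space T u l (\<lambda>t. axis t 1 + d t)" and z0: "z \<noteq> 0"
  shows "proj_point z \<notin> Z_set T"
proof
  assume "proj_point z \<in> Z_set T"
  then have "card (supp z) = 2" and zT: "supp z \<subseteq> T"
    by (simp_all add: proj_point_in_Z_set_iff[OF z0])
  then obtain p p' where pp: "supp z = {p, p'}" "p \<noteq> p'" by (meson card_2_iff)
  then have pT: "p \<in> T" "p' \<in> T" and zp: "z $ p \<noteq> 0" using zT by (auto simp: supp_def)
  have "z $ l = 0" using zT lT by (auto simp: supp_def)
  then have "(\<Sum>t\<in>T. z $ t *s (axis t 1 + d t)) = z" using zU by (simp add: X_tangent_space_def)
  then have z2: "z $ p *s (axis p 1 + d p) + z $ p' *s (axis p' 1 + d p') = z"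
    using sum_eq_sum_supp_Int[of T z "\<lambda>t. z $ t *s (axis t 1 + d t)"] pp zT
    by (simp add: Int_absorb2)
  have zp': "z $ p' = - z $ p"
    using zU sum_eq_sum_supp_Int[of T z "\<lambda>t. z $ t"] pp zT
    by (simp add: X_tangent_space_def Int_absorb2 eq_neg_iff_add_eq_0 add.commute)
  have "(d p - d p') $ s = 0" for s
  proof (cases "s \<in> T")
    case True
    then show ?thesis using dT pT by simp
  next
    case False
    then have "z $ s = 0" and "s \<noteq> p" and "s \<noteq> p'" using zT pT by (auto simp: supp_def)
    then have "z $ p * (d p $ s - d p' $ s) = 0"
      using arg_cong[OF z2, of "\<lambda>v. v $ s"] zp' by (simp add: axis_nth_if algebra_simps)
    then show ?thesis using zp by simp
  qed
  then have "d p = d p'" by (simp add: vec_eq_iff)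
  then show False using d_inj pT pp(2) by (auto simp: inj_on_def)
qed

lemma X_tangent_space_point_eq:
  fixes z u :: "'a::field^'k::finite" and d :: "'k \<Rightarrow> 'a^'k"
  assumes lT: "l \<notin> T" and dT: "\<forall>i\<in>T. \<forall>t\<in>insert l T. d i $ t = 0" and d_inj: "inj_on d T"
    and zU: "z \<in> X_tangent_space T u l (\<lambda>t. axis t 1 + d t)"
    and z0: "z \<noteq> 0" and zM: "proj_point z \<in> X_set T \<union> Y_set T V \<union> Z_set T"
  shows "proj_point z = proj_point u"
proof -
  have "proj_point z \<in> X_set T"
    using zM proj_point_X_tangent_space_notin_Y_set[OF zU z0]
      proj_point_X_tangent_space_notin_Z_set[OF lT dT d_inj zU z0] by blast
  then have "\<forall>t\<in>T. z $ t = 0" using z0 by (auto simp: proj_point_in_X_set_iff supp_def)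
  then have zu: "(z $ l / u $ l) *s u = z" using zU by (simp add: X_tangent_space_def)
  then have "z $ l / u $ l \<noteq> 0" using z0 by auto
  then show ?thesis using zu proj_point_scale by metis
qed

lemma tangent_X_set:
  fixes V :: "('a::{field,finite}^'k::finite) set set"
  assumes T0: "T \<noteq> {}" and q: "card T \<le> CARD('a) ^ (CARD('k) - card T - 1)"
    and xX: "x \<in> X_set T"
  shows "\<exists>U. is_tangent (CARD('k) - card T) (X_set T \<union> Y_set T V \<union> Z_set T) x U"
proof -
  obtain u l where uT: "\<forall>t\<in>T. u $ t = 0" and ul: "u $ l \<noteq> 0" and x: "x = proj_point u"
    using X_set_normal_form[OF xX] by blast
  then have lT: "l \<notin> T" by auto
  obtain j0 where j0: "j0 \<in> T" using T0 by blast
  obtain d :: "'k \<Rightarrow> 'a^'k" where d_inj: "inj_on d T"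
    and dT: "\<forall>i\<in>T. \<forall>t\<in>insert l T. d i $ t = 0"
    using obtain_inj_vanishing_on[of T "insert l T"] q lT by auto
  define f where "f = (\<lambda>t. axis t 1 + d t)"
  define S where "S = insert l (T - {j0})"
  define b where "b s = (if s = l then (1 / u $ l) *s u else f s - f j0)" for s
  have f: "\<forall>i\<in>T. \<forall>t\<in>insert l T. f i $ t = (if t = i then 1 else 0)"
    using dT lT by (auto simp: f_def axis_nth_if)
  have piv: "pivots_on S b"
    using f ul uT j0 lT by (auto simp: pivots_on_def S_def b_def)
  have "card S = card T" using lT j0 T0 by (simp add: S_def card_gt_0_iff Suc_diff_1)
  moreover have "card T \<le> CARD('k)" by (simp add: card_mono)
  ultimately have cardS: "card (b ` S) = CARD('k) - (CARD('k) - card T)"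
    using card_image[OF pivots_on_inj[OF piv]] by simp
  have "b ` S \<subseteq> X_tangent_space T u l f"
    using scale_in_X_tangent_space[OF uT ul] diff_in_X_tangent_space[OF f lT _ j0]
    by (auto simp: S_def b_def)
  then have span_sub: "vec.span (b ` S) \<subseteq> X_tangent_space T u l f"
    by (rule vec.span_minimal[OF _ subspace_X_tangent_space])
  have "is_tangent (CARD('k) - card T) (X_set T \<union> Y_set T V \<union> Z_set T) x (vec.span (b ` S))"
  proof (rule is_tangent_spanI[OF pivots_on_independent[OF piv] cardS X_Y_Z_subset_PG])
    show "x \<in> X_set T \<union> Y_set T V \<union> Z_set T" using xX by blast
    have "u = u $ l *s b l" using ul by (simp add: b_def vector_smult_assoc)
    also have "\<dots> \<in> vec.span (b ` S)" by (intro vec.span_scale vec.span_base) (simp add: S_def)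
    finally show "x \<subseteq> vec.span (b ` S)"
      using x by (simp add: proj_point_subset_iff vec.subspace_span)
  next
    fix z assume "z \<in> vec.span (b ` S)" and "z \<noteq> 0"
      and "proj_point z \<in> X_set T \<union> Y_set T V \<union> Z_set T"
    then show "proj_point z = x"
      using X_tangent_space_point_eq[OF lT dT d_inj] span_sub x unfolding f_def by blast
  qed
  then show ?thesis by blast
qed

theorem mainTheorem17:
  fixes T :: "'k::finite set"
    and V :: "(('a::{field,finite})^'k) set set"
    and m :: nat
  assumes "1 \<le> m" and "m \<le> CARD('k) - 1"
    and "card T = m"
    and "V \<subseteq> PG" and "card V = m - 1"
    and "\<forall>v\<in>V. supp_pt v \<inter> T = {}"
    and "m \<le> CARD('a) ^ (CARD('k) - m - 1)"
  shows "is_minimal_r_block (CARD('k) - m) (X_set T \<union> Y_set T V \<union> Z_set T)"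
proof -
  have fV: "finite V" by simp
  have "T \<noteq> {}" using assms(1,3) by auto
  have block: "\<exists>p\<in>X_set T \<union> Y_set T V \<union> Z_set T. p \<subseteq> U"
    if "vec.subspace U" and "vec.dim U = CARD('k) - (CARD('k) - m)" for U
    using X_Y_Z_meets_subspace[OF fV _ assms(6) that(1)] that(2) assms(1-3,5) by simp
  have tangent: "\<exists>U. is_tangent (CARD('k) - m) (X_set T \<union> Y_set T V \<union> Z_set T) x U"
    if "x \<in> X_set T \<union> Y_set T V \<union> Z_set T" for x
    using that tangent_X_set[OF \<open>T \<noteq> {}\<close>] tangent_Y_set[OF fV assms(4) _ assms(6)]
      tangent_Z_set[OF fV assms(4) _ assms(6)] assms(1,3,5,7) by auto
  show ?thesis
    unfolding is_minimal_r_block_def is_r_block_def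
    using X_Y_Z_subset_PG[of T V] block tangent assms(1,2) by auto
qed

end
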